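(* Let $f:\mathbb{R}^n\to\mathbb{R}$ be continuously differentiable and bounded below with $\nabla f$ Lipschitz continuous with constant $L(f)$, let $s$ be an integer with $0<s<n$, and let $\{\mathbf{x}^k\}_{k\ge0}$ be a sequence generated by the IHT method with constant $L>L(f)$. Then the sequence $\{f(\mathbf{x}^k)\}_{k\ge0}$ converges.
   Context: $C_s=\{\mathbf{x}\in\mathbb{R}^n:\|\mathbf{x}\|_0\le s\}$ where $\|\mathbf{x}\|_0$ is the number of nonzero components. $P_{C_s}(\mathbf{y})=\operatorname{argmin}_{\mathbf{x}\in C_s}\|\mathbf{x}-\mathbf{y}\|^2$ (possibly multi-valued). The IHT method with constant $L$: choose $\mathbf{x}^0\in C_s$ and for $k=0,1,2,\dots$ pick any $\mathbf{x}^{k+1}\in P_{C_s}\!\left(\mathbf{x}^k-\frac1L\nabla f(\mathbf{x}^k)\right)$. "$\nabla f$ Lipschitz with constant $L(f)$" means $\|\nabla f(\mathbf{x})-\nabla f(\mathbf{y})\|\le L(f)\|\mathbf{x}-\mathbf{y}\|$ for all $\mathbf{x},\mathbf{y}$. *)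

theory Defs
  imports "HOL-Analysis.Analysis"
begin

definition l0norm :: "real ^ 'n \<Rightarrow> nat" where
  "l0norm x = card {i. x $ i \<noteq> 0}"

definition Cs :: "nat \<Rightarrow> (real ^ 'n) set" where
  "Cs s = {x. l0norm x \<le> s}"

definition PCs :: "nat \<Rightarrow> real ^ 'n \<Rightarrow> (real ^ 'n) set" where
  "PCs s y = {x \<in> Cs s. \<forall>z \<in> Cs s. (norm (x - y))\<^sup>2 \<le> (norm (z - y))\<^sup>2}"

definition IHT_seq :: "nat \<Rightarrow> real \<Rightarrow> (real ^ 'n \<Rightarrow> real ^ 'n) \<Rightarrow> (nat \<Rightarrow> real ^ 'n) \<Rightarrow> bool" where
  "IHT_seq s L grad x \<longleftrightarrow> x 0 \<in> Cs s \<and>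
     (\<forall>k. x (Suc k) \<in> PCs s (x k - (1 / L) *\<^sub>R grad (x k)))"

end

theory Submission
  imports Defs
begin

text \<open>The objective values decrease along the iterates: the projection step moves at least as
  close to the gradient step as staying put, so \<open>\<nabla>f(x\<^sup>k) \<bullet> (x\<^sup>k\<^sup>+\<^sup>1 - x\<^sup>k) \<le> -L/2 \<parallel>x\<^sup>k\<^sup>+\<^sup>1 - x\<^sup>k\<parallel>\<^sup>2\<close>,
  and the descent lemma for an \<open>L(f)\<close>-Lipschitz gradient then gives
  \<open>f(x\<^sup>k\<^sup>+\<^sup>1) \<le> f(x\<^sup>k) - (L - L(f))/2 \<parallel>x\<^sup>k\<^sup>+\<^sup>1 - x\<^sup>k\<parallel>\<^sup>2\<close>.
  A decreasing sequence bounded below converges.\<close>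

lemma descent_lemma:
  fixes f :: "'a::real_inner \<Rightarrow> real" and grad :: "'a \<Rightarrow> 'a"
  assumes deriv: "\<And>y. (f has_derivative (\<lambda>h. grad y \<bullet> h)) (at y)"
    and lip: "\<And>y z. norm (grad y - grad z) \<le> Lf * norm (y - z)"
  shows "f y \<le> f x + grad x \<bullet> (y - x) + Lf / 2 * (norm (y - x))\<^sup>2"
proof -
  define d where "d = y - x"
  define \<phi> where "\<phi> t = f (x + t *\<^sub>R d) - t * (grad x \<bullet> d) - Lf / 2 * t\<^sup>2 * (norm d)\<^sup>2" for t
  have \<phi>_deriv: "DERIV \<phi> t :> grad (x + t *\<^sub>R d) \<bullet> d - grad x \<bullet> d - Lf * t * (norm d)\<^sup>2" for t
  proof -
    have "((\<lambda>t. x + t *\<^sub>R d) has_derivative (\<lambda>h. h *\<^sub>R d)) (at t)"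
      by (auto intro!: derivative_eq_intros)
    from has_derivative_compose[OF this deriv]
    have "DERIV (\<lambda>t. f (x + t *\<^sub>R d)) t :> grad (x + t *\<^sub>R d) \<bullet> d"
      by (simp add: has_field_derivative_def mult.commute[of _ "grad _ \<bullet> d"])
    then show ?thesis
      unfolding \<phi>_def by (auto intro!: derivative_eq_intros simp: power2_eq_square)
  qed
  have "\<phi> 1 \<le> \<phi> 0"
  proof (rule DERIV_nonpos_imp_nonincreasing[of 0 1 \<phi>])
    fix t :: real assume t: "0 \<le> t" "t \<le> 1"
    have "grad (x + t *\<^sub>R d) \<bullet> d - grad x \<bullet> d = (grad (x + t *\<^sub>R d) - grad x) \<bullet> d"
      by (simp add: inner_diff_left)
    also have "\<dots> \<le> norm (grad (x + t *\<^sub>R d) - grad x) * norm d"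
      by (rule Cauchy_Schwarz_ineq2[THEN order_trans[OF abs_ge_self]])
    also have "\<dots> \<le> Lf * norm (t *\<^sub>R d) * norm d"
      using lip[of "x + t *\<^sub>R d" x] by (intro mult_right_mono) auto
    also have "\<dots> = Lf * t * (norm d)\<^sup>2"
      using t by (simp add: power2_eq_square)
    finally show "\<exists>y. DERIV \<phi> t :> y \<and> y \<le> 0"
      using \<phi>_deriv by fastforce
  qed simp
  then show ?thesis
    unfolding \<phi>_def d_def by simp
qed

lemma lipschitz_const_nonneg:
  fixes g :: "'a::real_normed_vector \<Rightarrow> 'b::real_normed_vector" and v :: 'a
  assumes lip: "\<And>y z. norm (g y - g z) \<le> Lf * norm (y - z)" and "v \<noteq> 0"
  shows "0 \<le> Lf"
proof -
  have "0 \<le> Lf * norm (v - 0)"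
    using lip[of v 0] norm_ge_zero order_trans by blast
  with \<open>v \<noteq> 0\<close> show ?thesis
    by (simp add: zero_le_mult_iff)
qed

lemma inner_step_le_of_nearer:
  fixes x x' g :: "'a::real_inner"
  assumes "0 < L"
    and nearer: "(norm (x' - (x - (1/L) *\<^sub>R g)))\<^sup>2 \<le> (norm (x - (x - (1/L) *\<^sub>R g)))\<^sup>2"
  shows "g \<bullet> (x' - x) \<le> - L / 2 * (norm (x' - x))\<^sup>2"
proof -
  define d where "d = x' - x"
  from nearer have "(norm (d + (1/L) *\<^sub>R g))\<^sup>2 \<le> (norm ((1/L) *\<^sub>R g))\<^sup>2"
    unfolding d_def by (simp add: algebra_simps)
  then have "(norm d)\<^sup>2 + 2 * (1/L) * (g \<bullet> d) \<le> 0"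
    unfolding power2_norm_eq_inner
    by (simp add: inner_add_left inner_add_right inner_commute algebra_simps power2_eq_square)
  with \<open>0 < L\<close> show ?thesis
    unfolding d_def by (simp add: field_simps)
qed

lemma projected_gradient_step_decrease:
  fixes f :: "'a::real_inner \<Rightarrow> real" and grad :: "'a \<Rightarrow> 'a"
  assumes deriv: "\<And>y. (f has_derivative (\<lambda>h. grad y \<bullet> h)) (at y)"
    and lip: "\<And>y z. norm (grad y - grad z) \<le> Lf * norm (y - z)"
    and "0 < L"
    and nearer: "(norm (x' - (x - (1/L) *\<^sub>R grad x)))\<^sup>2 \<le> (norm (x - (x - (1/L) *\<^sub>R grad x)))\<^sup>2"
  shows "f x' \<le> f x - (L - Lf) / 2 * (norm (x' - x))\<^sup>2"
proof -
  have "f x' \<le> f x + grad x \<bullet> (x' - x) + Lf / 2 * (norm (x' - x))\<^sup>2"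
    by (rule descent_lemma[OF deriv lip])
  also have "\<dots> \<le> f x - (L - Lf) / 2 * (norm (x' - x))\<^sup>2"
    using inner_step_le_of_nearer[OF \<open>0 < L\<close> nearer] by (simp add: field_simps)
  finally show ?thesis .
qed

lemma IHT_seq_in_Cs:
  assumes "IHT_seq s L grad x"
  shows "x k \<in> Cs s"
  using assms unfolding IHT_seq_def PCs_def by (cases k) auto

lemma IHT_seq_decseq:
  fixes f :: "real ^ 'n \<Rightarrow> real"
  assumes deriv: "\<And>y. (f has_derivative (\<lambda>h. grad y \<bullet> h)) (at y)"
    and lip: "\<And>y z. norm (grad y - grad z) \<le> Lf * norm (y - z)"
    and "Lf < L"
    and iht: "IHT_seq s L grad x"
  shows "decseq (\<lambda>k. f (x k))"
proof (rule decseq_SucI)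
  fix k
  have "0 < L"
    using lipschitz_const_nonneg[OF lip, of "1 :: real ^ 'n"] \<open>Lf < L\<close> by simp
  have "(norm (x (Suc k) - (x k - (1/L) *\<^sub>R grad (x k))))\<^sup>2
        \<le> (norm (x k - (x k - (1/L) *\<^sub>R grad (x k))))\<^sup>2"
  proof -
    have "x (Suc k) \<in> PCs s (x k - (1/L) *\<^sub>R grad (x k))"
      using iht unfolding IHT_seq_def by blast
    with IHT_seq_in_Cs[OF iht, of k] show ?thesis
      unfolding PCs_def by blast
  qed
  from projected_gradient_step_decrease[OF deriv lip \<open>0 < L\<close> this]
  have "f (x (Suc k)) \<le> f (x k) - (L - Lf) / 2 * (norm (x (Suc k) - x k))\<^sup>2" .
  moreover have "0 \<le> (L - Lf) / 2 * (norm (x (Suc k) - x k))\<^sup>2"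
    using \<open>Lf < L\<close> by (intro mult_nonneg_nonneg) auto
  ultimately show "f (x (Suc k)) \<le> f (x k)"
    by linarith
qed

theorem corollary3p1:
  fixes f :: "real ^ 'n \<Rightarrow> real"
    and grad :: "real ^ 'n \<Rightarrow> real ^ 'n"
    and Lf L :: real and s :: nat
    and x :: "nat \<Rightarrow> real ^ 'n"
  assumes deriv: "\<And>y. (f has_derivative (\<lambda>h. grad y \<bullet> h)) (at y)"
    and cont_grad: "continuous_on UNIV grad"
    and bdd: "bdd_below (range f)"
    and lip: "\<And>y z. norm (grad y - grad z) \<le> Lf * norm (y - z)"
    and s_pos: "0 < s" and s_lt: "s < CARD('n)"
    and L_gt: "L > Lf"
    and iht: "IHT_seq s L grad x"
  shows "convergent (\<lambda>k. f (x k))"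
proof -
  have "decseq (\<lambda>k. f (x k))"
    using IHT_seq_decseq[OF deriv lip L_gt iht] .
  moreover obtain m where "\<And>k. m \<le> f (x k)"
    using bdd unfolding bdd_below_def by auto
  ultimately show ?thesis
    by (metis decseq_convergent convergent_def)
qed

end
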